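(* Valuated flag gammoids are closed under translation: if $\boldsymbol\mu=(\mu_1,\dots,\mu_s)$ is a valuated flag gammoid on $[n]$ and $x\in\mathbb{R}^n$, then $\boldsymbol\mu+x=(\mu_1+x,\dots,\mu_s+x)$, where $(\mu_j+x)(B)=\mu_j(B)+\sum_{i\in B}x_i$, is a valuated flag gammoid.
   Context: A valuated flag gammoid is a tuple $(\mu_1,\dots,\mu_s)$ arising as follows: $\Gamma=(V,E)$ is a finite directed graph with $[n]\subseteq V$, $w:E\to\mathbb{R}$ edge weights with no negative-weight directed cycle, $S_1\subset\dots\subset S_s\subseteq V$ with $|S_j|=d_j$ such that some subset of $[n]$ has a linking onto each $S_j$, and $\mu_j(I)$, for $I\in\binom{[n]}{d_j}$, is the minimum total weight of a linking from $I$ onto $S_j$ ($\infty$ if none). A linking from $I$ onto $J$ is a family of $|I|=|J|$ pairwise vertex-disjoint directed paths (length 0 allowed) from the vertices of $I$ to the vertices of $J$. *)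

theory Defs
  imports Main "HOL-Library.Extended_Real"
begin

definition is_walk :: "(nat \<times> nat) set \<Rightarrow> nat list \<Rightarrow> bool" where
  "is_walk E p \<longleftrightarrow> p \<noteq> [] \<and> (\<forall>k < length p - 1. (p ! k, p ! Suc k) \<in> E)"

definition is_path :: "(nat \<times> nat) set \<Rightarrow> nat list \<Rightarrow> bool" where
  "is_path E p \<longleftrightarrow> is_walk E p \<and> distinct p"

definition walk_weight :: "(nat \<times> nat \<Rightarrow> real) \<Rightarrow> nat list \<Rightarrow> real" where
  "walk_weight w p = (\<Sum>k < length p - 1. w (p ! k, p ! Suc k))"

definition no_neg_cycle :: "(nat \<times> nat) set \<Rightarrow> (nat \<times> nat \<Rightarrow> real) \<Rightarrow> bool" where
  "no_neg_cycle E w \<longleftrightarrow>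
     (\<forall>p. is_walk E p \<and> length p \<ge> 2 \<and> hd p = last p \<longrightarrow> walk_weight w p \<ge> 0)"

definition is_linking :: "(nat \<times> nat) set \<Rightarrow> nat set \<Rightarrow> nat set \<Rightarrow> (nat \<Rightarrow> nat list) \<Rightarrow> bool" where
  "is_linking E I J P \<longleftrightarrow> finite I \<and> card I = card J \<and>
     (\<forall>i\<in>I. is_path E (P i) \<and> hd (P i) = i) \<and>
     (\<lambda>i. last (P i)) ` I = J \<and>
     (\<forall>i\<in>I. \<forall>i'\<in>I. i \<noteq> i' \<longrightarrow> set (P i) \<inter> set (P i') = {})"

(* minimum weight of a linking from I onto J; Inf of the empty set is \<infinity> *)
definition min_link_weight ::
  "(nat \<times> nat) set \<Rightarrow> (nat \<times> nat \<Rightarrow> real) \<Rightarrow> nat set \<Rightarrow> nat set \<Rightarrow> ereal" where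
  "min_link_weight E w I J =
     (INF P \<in> {P. is_linking E I J P}. ereal (\<Sum>i\<in>I. walk_weight w (P i)))"

(* mus = [mu_1,...,mu_s]; mu_j is only constrained on d_j-subsets of [n] *)
definition valuated_flag_gammoid :: "nat \<Rightarrow> (nat set \<Rightarrow> ereal) list \<Rightarrow> bool" where
  "valuated_flag_gammoid n mus \<longleftrightarrow>
     (\<exists>(V :: nat set) E w (S :: nat set list).
        finite V \<and> {1..n} \<subseteq> V \<and> E \<subseteq> V \<times> V \<and> no_neg_cycle E w \<and>
        length S = length mus \<and>
        (\<forall>j < length S. S ! j \<subseteq> V) \<and>
        (\<forall>j. Suc j < length S \<longrightarrow> S ! j \<subset> S ! Suc j) \<and>
        (\<forall>j < length S. \<exists>I \<subseteq> {1..n}. \<exists>P. is_linking E I (S ! j) P) \<and>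
        (\<forall>j < length mus. \<forall>I. I \<subseteq> {1..n} \<and> card I = card (S ! j) \<longrightarrow>
            (mus ! j) I = min_link_weight E w I (S ! j)))"

definition translate_val :: "(nat \<Rightarrow> real) \<Rightarrow> (nat set \<Rightarrow> ereal) \<Rightarrow> (nat set \<Rightarrow> ereal)" where
  "translate_val x mu = (\<lambda>B. mu B + ereal (\<Sum>i\<in>B. x i))"

end

theory Submission
  imports Defs
begin

text \<open>
  Rename every vertex v of the given graph to v + n + 1 and use the freed labels 1, ..., n as
  new sources, source i having a single outgoing edge, of weight x i, into the copy of i.
  A linking from I \<subseteq> [n] in the new graph is then a linking from I in the old graph with
  every path prefixed by its source edge, so every linking weight, hence every minimum,
  grows by the sum of x over I. The sources have no incoming edges, so they lie on no
  cycle and no negative cycle is created.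
\<close>

lemma is_walk_singleton: "is_walk E [a]"
  by (simp add: is_walk_def)

lemma is_walk_Cons_Cons: "is_walk E (a # b # p) \<longleftrightarrow> (a, b) \<in> E \<and> is_walk E (b # p)"
  by (auto simp: is_walk_def less_Suc_eq_0_disj)

lemma walk_weight_Cons_Cons: "walk_weight w (a # b # p) = w (a, b) + walk_weight w (b # p)"
  unfolding walk_weight_def by (simp del: sum.lessThan_Suc add: sum.lessThan_Suc_shift)

lemma is_walk_last_edge:
  assumes "is_walk E p" and "2 \<le> length p"
  shows "(p ! (length p - 2), last p) \<in> E"
proof -
  have "p \<noteq> []"
    using assms(2) by auto
  then have "Suc (length p - 2) = length p - 1" and "last p = p ! (length p - 1)"
    using assms(2) by (auto simp: last_conv_nth)
  then show ?thesis
    using assms unfolding is_walk_def by (metis lessI)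
qed

lemma is_walk_map_iff:
  assumes "\<And>a b. (f a, f b) \<in> F \<longleftrightarrow> (a, b) \<in> E"
  shows "is_walk F (map f p) \<longleftrightarrow> is_walk E p"
  using assms by (simp add: is_walk_def)

lemma walk_weight_map:
  assumes "\<And>a b. w' (f a, f b) = w (a, b)"
  shows "walk_weight w' (map f p) = walk_weight w p"
  using assms by (simp add: walk_weight_def)

lemma walk_lift:
  assumes edges: "\<And>a c. (f a, c) \<in> F \<Longrightarrow> \<exists>b. c = f b \<and> (a, b) \<in> E"
  shows "is_walk F q \<Longrightarrow> hd q = f a \<Longrightarrow> \<exists>p. q = map f p \<and> hd p = a \<and> is_walk E p"
proof (induction q arbitrary: a)
  case Nil
  then show ?case by (simp add: is_walk_def)
next
  case (Cons c rest)
  show ?case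
  proof (cases rest)
    case Nil
    then show ?thesis using Cons.prems by (intro exI[of _ "[a]"]) (simp add: is_walk_singleton)
  next
    case (Cons d rest')
    with Cons.prems obtain b where b: "d = f b" "(a, b) \<in> E" and walk: "is_walk F rest"
      using edges by (auto simp: is_walk_Cons_Cons)
    have "hd rest = f b"
      using b(1) \<open>rest = d # rest'\<close> by simp
    then obtain p where p: "rest = map f p" "hd p = b" "is_walk E p"
      using Cons.IH[OF walk] by blast
    have "is_walk E (a # p)"
      using b(2) p(2,3) by (cases p) (simp_all add: is_walk_Cons_Cons is_walk_singleton)
    moreover have "c # rest = map f (a # p)"
      using Cons.prems(2) p(1) by simp
    ultimately show ?thesis
      by (intro exI[of _ "a # p"]) simp
  qed
qed

lemma INF_add_ereal_real:
  fixes f :: "'a \<Rightarrow> ereal"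
  shows "(INF i\<in>I. f i + ereal c) = (INF i\<in>I. f i) + ereal c"
proof (rule antisym)
  show "(INF i\<in>I. f i) + ereal c \<le> (INF i\<in>I. f i + ereal c)"
    by (rule INF_greatest) (intro add_right_mono INF_lower)
  have "(INF i\<in>I. f i + ereal c) + ereal (-c) \<le> (INF i\<in>I. f i)"
  proof (rule INF_greatest)
    fix i assume "i \<in> I"
    then have "(INF i\<in>I. f i + ereal c) \<le> f i + ereal c" by (rule INF_lower)
    then have "(INF i\<in>I. f i + ereal c) + ereal (-c) \<le> f i + ereal c + ereal (-c)"
      by (rule add_right_mono)
    also have "\<dots> = f i" by (cases "f i") auto
    finally show "(INF i\<in>I. f i + ereal c) + ereal (-c) \<le> f i" .
  qed
  then have "(INF i\<in>I. f i + ereal c) + ereal (-c) + ereal c \<le> (INF i\<in>I. f i) + ereal c"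
    by (rule add_right_mono)
  moreover have "(INF i\<in>I. f i + ereal c) + ereal (-c) + ereal c = (INF i\<in>I. f i + ereal c)"
    by (cases "(INF i\<in>I. f i + ereal c)") auto
  ultimately show "(INF i\<in>I. f i + ereal c) \<le> (INF i\<in>I. f i) + ereal c" by simp
qed

definition relabel :: "nat \<Rightarrow> nat \<Rightarrow> nat" where
  "relabel n v = v + Suc n"

lemma inj_on_relabel: "inj_on (relabel n) A"
  by (simp add: inj_on_def relabel_def)

lemma card_relabel_image: "card (relabel n ` A) = card A"
  by (simp add: card_image inj_on_relabel)

definition translation_edges :: "nat \<Rightarrow> (nat \<times> nat) set \<Rightarrow> (nat \<times> nat) set" where
  "translation_edges n E =
     {(i, relabel n i) | i. i \<in> {1..n}} \<union> map_prod (relabel n) (relabel n) ` E"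

definition translation_weight ::
  "nat \<Rightarrow> (nat \<Rightarrow> real) \<Rightarrow> (nat \<times> nat \<Rightarrow> real) \<Rightarrow> nat \<times> nat \<Rightarrow> real" where
  "translation_weight n x w = (\<lambda>(a, b). if a \<le> n then x a else w (a - Suc n, b - Suc n))"

definition translation_linking :: "nat \<Rightarrow> (nat \<Rightarrow> nat list) \<Rightarrow> nat \<Rightarrow> nat list" where
  "translation_linking n P i = i # map (relabel n) (P i)"

lemma relabel_gt [simp]: "n < relabel n v"
  by (simp add: relabel_def)

lemma relabel_edge_iff [simp]:
  "(relabel n a, relabel n b) \<in> translation_edges n E \<longleftrightarrow> (a, b) \<in> E"
proof -
  have inj: "inj (map_prod (relabel n) (relabel n))"
    using map_prod_inj_on[OF inj_on_relabel inj_on_relabel, where A = UNIV and B = UNIV] by simp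
  have "(relabel n a, relabel n b) \<in> map_prod (relabel n) (relabel n) ` E \<longleftrightarrow> (a, b) \<in> E"
    using inj_image_mem_iff[OF inj, of "(a, b)" E] by simp
  moreover have "relabel n a \<notin> {1..n}"
    by (simp add: relabel_def)
  ultimately show ?thesis
    by (auto simp: translation_edges_def)
qed

lemma relabel_edge_target:
  "(relabel n a, c) \<in> translation_edges n E \<Longrightarrow> \<exists>b. c = relabel n b \<and> (a, b) \<in> E"
  by (auto simp: translation_edges_def relabel_def)

lemma source_edge_iff:
  "i \<le> n \<Longrightarrow> (i, c) \<in> translation_edges n E \<longleftrightarrow> i \<in> {1..n} \<and> c = relabel n i"
  by (auto simp: translation_edges_def relabel_def)

lemma translation_edge_target: "(a, c) \<in> translation_edges n E \<Longrightarrow> n < c"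
  by (auto simp: translation_edges_def)

lemma translation_weight_relabel [simp]:
  "translation_weight n x w (relabel n a, relabel n b) = w (a, b)"
  by (simp add: translation_weight_def relabel_def)

lemma translation_weight_source: "i \<le> n \<Longrightarrow> translation_weight n x w (i, c) = x i"
  by (simp add: translation_weight_def)

lemma is_path_translation:
  assumes "i \<in> {1..n}" and "is_path E p" and "hd p = i"
  shows "is_path (translation_edges n E) (i # map (relabel n) p)"
proof -
  obtain rest where p: "p = i # rest"
    using assms(2,3) by (cases p) (auto simp: is_path_def is_walk_def)
  have "is_walk (translation_edges n E) (map (relabel n) p)"
    using assms(2) by (simp add: is_walk_map_iff is_path_def)
  then have "is_walk (translation_edges n E) (i # map (relabel n) p)"
    using assms(1) p by (simp add: is_walk_Cons_Cons source_edge_iff)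
  moreover have "i \<notin> relabel n ` set p"
    using assms(1) by (auto simp: relabel_def)
  ultimately show ?thesis
    using assms(2) by (simp add: is_path_def distinct_map inj_on_relabel)
qed

lemma is_path_translationE:
  assumes "i \<le> n" and "is_path (translation_edges n E) q" and "hd q = i" and "n < last q"
  obtains p where "q = i # map (relabel n) p" and "is_path E p" and "hd p = i"
proof -
  obtain rest where q: "q = i # rest"
    using assms(2,3) by (cases q) (auto simp: is_path_def is_walk_def)
  with assms(1,4) obtain c rest' where rest: "rest = c # rest'"
    by (cases rest) auto
  with assms(1,2) q have "c = relabel n i" and walk: "is_walk (translation_edges n E) rest"
    by (auto simp: is_path_def is_walk_Cons_Cons source_edge_iff)
  then have "hd rest = relabel n i"
    using rest by simp
  then obtain p where p: "rest = map (relabel n) p" "hd p = i" "is_walk E p"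
    using walk_lift[of "relabel n" "translation_edges n E" E, OF relabel_edge_target walk]
    by blast
  have "distinct (map (relabel n) p)"
    using assms(2) q p(1) by (simp add: is_path_def)
  then have "distinct p"
    by (simp add: distinct_map)
  then show ?thesis
    using q p by (intro that) (auto simp: is_path_def)
qed

lemma walk_weight_translation:
  assumes "i \<le> n" and "p \<noteq> []" and "hd p = i"
  shows "walk_weight (translation_weight n x w) (i # map (relabel n) p) = x i + walk_weight w p"
proof -
  obtain rest where p: "p = i # rest"
    using assms(2,3) by (cases p) auto
  have "walk_weight (translation_weight n x w) (map (relabel n) p) = walk_weight w p"
    by (rule walk_weight_map) simp
  moreover have "walk_weight (translation_weight n x w) (i # map (relabel n) p)
      = translation_weight n x w (i, relabel n i)
        + walk_weight (translation_weight n x w) (map (relabel n) p)"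
    using p by (simp add: walk_weight_Cons_Cons)
  ultimately show ?thesis
    using assms(1) by (simp add: translation_weight_source)
qed

lemma is_linking_translation:
  assumes L: "is_linking E I J P" and I: "I \<subseteq> {1..n}"
  shows "is_linking (translation_edges n E) I (relabel n ` J) (translation_linking n P)"
proof -
  have paths: "\<And>i. i \<in> I \<Longrightarrow> is_path E (P i) \<and> hd (P i) = i"
    and ends: "(\<lambda>i. last (P i)) ` I = J"
    and disjoint: "\<And>i i'. i \<in> I \<Longrightarrow> i' \<in> I \<Longrightarrow> i \<noteq> i' \<Longrightarrow> set (P i) \<inter> set (P i') = {}"
    using L by (auto simp: is_linking_def)
  have nonempty: "\<And>i. i \<in> I \<Longrightarrow> P i \<noteq> []"
    using paths by (auto simp: is_path_def is_walk_def)
  have "(\<lambda>i. last (translation_linking n P i)) ` I = relabel n ` (\<lambda>i. last (P i)) ` I"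
    using nonempty by (auto simp: translation_linking_def last_map image_image)
  moreover have "set (translation_linking n P i) \<inter> set (translation_linking n P i') = {}"
    if "i \<in> I" "i' \<in> I" "i \<noteq> i'" for i i'
  proof -
    have "relabel n ` set (P i) \<inter> relabel n ` set (P i') = {}"
      using disjoint[OF that] by (simp add: image_Int[OF inj_on_relabel, symmetric])
    then show ?thesis
      using I that by (auto simp: translation_linking_def relabel_def)
  qed
  ultimately show ?thesis
    using L I paths ends is_path_translation
    by (auto simp: is_linking_def translation_linking_def subset_iff card_relabel_image)
qed

lemma is_linking_translationE:
  assumes L: "is_linking (translation_edges n E) I (relabel n ` J) Q" and I: "I \<subseteq> {1..n}"
  obtains P where "is_linking E I J P" and "\<And>i. i \<in> I \<Longrightarrow> Q i = translation_linking n P i"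
proof -
  have paths: "\<And>i. i \<in> I \<Longrightarrow> is_path (translation_edges n E) (Q i) \<and> hd (Q i) = i"
    and ends: "(\<lambda>i. last (Q i)) ` I = relabel n ` J"
    and disjoint: "\<And>i i'. i \<in> I \<Longrightarrow> i' \<in> I \<Longrightarrow> i \<noteq> i' \<Longrightarrow> set (Q i) \<inter> set (Q i') = {}"
    using L by (auto simp: is_linking_def)
  have "\<exists>p. Q i = i # map (relabel n) p \<and> is_path E p \<and> hd p = i" if i: "i \<in> I" for i
  proof -
    have "last (Q i) \<in> relabel n ` J"
      using ends i by blast
    then have "n < last (Q i)"
      by auto
    moreover have "i \<le> n"
      using I i by auto
    ultimately show ?thesis
      using is_path_translationE paths[OF i] by metis
  qed
  then obtain P where
    P: "\<And>i. i \<in> I \<Longrightarrow> Q i = translation_linking n P i \<and> is_path E (P i) \<and> hd (P i) = i"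
    unfolding translation_linking_def by metis
  have nonempty: "\<And>i. i \<in> I \<Longrightarrow> P i \<noteq> []"
    using P by (auto simp: is_path_def is_walk_def)
  have "relabel n ` (\<lambda>i. last (P i)) ` I = (\<lambda>i. last (Q i)) ` I"
    using P nonempty by (force simp: translation_linking_def last_map image_iff)
  then have "(\<lambda>i. last (P i)) ` I = J"
    using ends by (simp add: inj_image_eq_iff[OF inj_on_relabel])
  moreover have "set (P i) \<inter> set (P i') = {}" if "i \<in> I" "i' \<in> I" "i \<noteq> i'" for i i'
  proof -
    have "relabel n ` set (P i) \<inter> relabel n ` set (P i') = {}"
      using disjoint[OF that] P that by (fastforce simp: translation_linking_def)
    then show ?thesis
      by (simp add: image_Int[OF inj_on_relabel, symmetric])
  qed
  moreover have "card I = card J"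
    using L by (simp add: is_linking_def card_relabel_image)
  ultimately have "is_linking E I J P"
    using L P by (auto simp: is_linking_def)
  then show ?thesis
    using P that by blast
qed

lemma linking_weight_translation:
  assumes "is_linking E I J P" and "I \<subseteq> {1..n}"
  shows "(\<Sum>i\<in>I. walk_weight (translation_weight n x w) (translation_linking n P i))
    = (\<Sum>i\<in>I. walk_weight w (P i)) + sum x I"
proof -
  have "walk_weight (translation_weight n x w) (translation_linking n P i)
      = x i + walk_weight w (P i)" if "i \<in> I" for i
    using assms that unfolding translation_linking_def
    by (intro walk_weight_translation) (auto simp: is_linking_def is_path_def is_walk_def)
  then show ?thesis
    by (simp add: sum.distrib add.commute)
qed

lemma linking_weight_image_translation:
  assumes I: "I \<subseteq> {1..n}"
  shows "(\<lambda>Q. \<Sum>i\<in>I. walk_weight (translation_weight n x w) (Q i))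
           ` {Q. is_linking (translation_edges n E) I (relabel n ` J) Q}
       = (\<lambda>P. (\<Sum>i\<in>I. walk_weight w (P i)) + sum x I) ` {P. is_linking E I J P}"
    (is "?weight' ` ?linkings' = ?weight_plus ` ?linkings")
proof (intro equalityI subsetI)
  fix s assume "s \<in> ?weight' ` ?linkings'"
  then obtain Q where Q: "is_linking (translation_edges n E) I (relabel n ` J) Q" "s = ?weight' Q"
    by blast
  then obtain P where P: "is_linking E I J P"
    and Q_eq: "\<And>i. i \<in> I \<Longrightarrow> Q i = translation_linking n P i"
    using is_linking_translationE[OF _ I] by blast
  have "?weight' Q = (\<Sum>i\<in>I. walk_weight (translation_weight n x w) (translation_linking n P i))"
    using Q_eq by (intro sum.cong) simp_all
  then have "s = ?weight_plus P"
    using Q(2) linking_weight_translation[OF P I] by simp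
  then show "s \<in> ?weight_plus ` ?linkings"
    using P by (intro image_eqI[where x = P]) auto
next
  fix s assume "s \<in> ?weight_plus ` ?linkings"
  then obtain P where P: "is_linking E I J P" and "s = ?weight_plus P"
    by blast
  then have "s = ?weight' (translation_linking n P)"
    using linking_weight_translation[OF P I] by simp
  then show "s \<in> ?weight' ` ?linkings'"
    using is_linking_translation[OF P I]
    by (intro image_eqI[where x = "translation_linking n P"]) auto
qed

lemma min_link_weight_translation:
  assumes "I \<subseteq> {1..n}"
  shows "min_link_weight (translation_edges n E) (translation_weight n x w) I (relabel n ` J)
    = min_link_weight E w I J + ereal (sum x I)"
proof -
  have "min_link_weight (translation_edges n E) (translation_weight n x w) I (relabel n ` J)
      = (INF P\<in>{P. is_linking E I J P}. ereal ((\<Sum>i\<in>I. walk_weight w (P i)) + sum x I))"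
    using arg_cong[OF linking_weight_image_translation[OF assms], of "(`) ereal"]
    by (simp only: min_link_weight_def image_image)
  also have "\<dots> = min_link_weight E w I J + ereal (sum x I)"
    unfolding min_link_weight_def by (simp add: INF_add_ereal_real[symmetric])
  finally show ?thesis .
qed

lemma no_neg_cycle_translation:
  assumes "no_neg_cycle E w"
  shows "no_neg_cycle (translation_edges n E) (translation_weight n x w)"
  unfolding no_neg_cycle_def
proof (intro allI impI)
  fix q assume "is_walk (translation_edges n E) q \<and> 2 \<le> length q \<and> hd q = last q"
  then have walk: "is_walk (translation_edges n E) q" and len: "2 \<le> length q"
    and closed: "hd q = last q"
    by auto
  have "n < last q"
    using translation_edge_target[OF is_walk_last_edge[OF walk len]] .
  then have "hd q = relabel n (hd q - Suc n)"
    using closed by (simp add: relabel_def)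
  then obtain p where p: "q = map (relabel n) p" "is_walk E p"
    using walk_lift[of "relabel n" "translation_edges n E" E, OF relabel_edge_target walk] by blast
  have "p \<noteq> []"
    using p(1) len by auto
  then have "relabel n (hd p) = relabel n (last p)"
    using p(1) closed by (simp add: hd_map last_map)
  then have "hd p = last p"
    using inj_on_relabel by (simp add: inj_eq)
  moreover have "2 \<le> length p"
    using p(1) len by simp
  ultimately have "walk_weight w p \<ge> 0"
    using assms p(2) unfolding no_neg_cycle_def by blast
  moreover have "walk_weight (translation_weight n x w) q = walk_weight w p"
    using p(1) by (simp add: walk_weight_map)
  ultimately show "walk_weight (translation_weight n x w) q \<ge> 0"
    by simp
qed

definition gammoid_presentation ::
  "nat \<Rightarrow> nat set \<Rightarrow> (nat \<times> nat) set \<Rightarrow> (nat \<times> nat \<Rightarrow> real) \<Rightarrow> nat set list \<Rightarrow>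
   (nat set \<Rightarrow> ereal) list \<Rightarrow> bool" where
  "gammoid_presentation n V E w S mus \<longleftrightarrow>
     finite V \<and> {1..n} \<subseteq> V \<and> E \<subseteq> V \<times> V \<and> no_neg_cycle E w \<and>
     length S = length mus \<and>
     (\<forall>j < length S. S ! j \<subseteq> V) \<and>
     (\<forall>j. Suc j < length S \<longrightarrow> S ! j \<subset> S ! Suc j) \<and>
     (\<forall>j < length S. \<exists>I \<subseteq> {1..n}. \<exists>P. is_linking E I (S ! j) P) \<and>
     (\<forall>j < length mus. \<forall>I. I \<subseteq> {1..n} \<and> card I = card (S ! j) \<longrightarrow>
         (mus ! j) I = min_link_weight E w I (S ! j))"

lemma valuated_flag_gammoid_iff_presentation:
  "valuated_flag_gammoid n mus \<longleftrightarrow> (\<exists>V E w S. gammoid_presentation n V E w S mus)"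
  unfolding valuated_flag_gammoid_def gammoid_presentation_def by (rule refl)

lemma gammoid_presentation_translation:
  assumes "gammoid_presentation n V E w S mus"
  shows "gammoid_presentation n ({1..n} \<union> relabel n ` V) (translation_edges n E)
           (translation_weight n x w) (map ((`) (relabel n)) S) (map (translate_val x) mus)"
proof -
  have V: "finite V" "{1..n} \<subseteq> V" and E: "E \<subseteq> V \<times> V" and w: "no_neg_cycle E w"
    and length: "length S = length mus" and S: "\<forall>j < length S. S ! j \<subseteq> V"
    and chain: "\<forall>j. Suc j < length S \<longrightarrow> S ! j \<subset> S ! Suc j"
    and linkable: "\<forall>j < length S. \<exists>I \<subseteq> {1..n}. \<exists>P. is_linking E I (S ! j) P"
    and valuation: "\<forall>j < length mus. \<forall>I. I \<subseteq> {1..n} \<and> card I = card (S ! j) \<longrightarrow>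
         (mus ! j) I = min_link_weight E w I (S ! j)"
    using assms unfolding gammoid_presentation_def by simp_all
  have "translation_edges n E \<subseteq> ({1..n} \<union> relabel n ` V) \<times> ({1..n} \<union> relabel n ` V)"
    using E V(2) by (auto simp: translation_edges_def)
  moreover have "\<forall>j < length S. relabel n ` (S ! j) \<subseteq> {1..n} \<union> relabel n ` V"
    using S by blast
  moreover have "\<forall>j. Suc j < length S \<longrightarrow> relabel n ` (S ! j) \<subset> relabel n ` (S ! Suc j)"
  proof (intro allI impI)
    fix j assume "Suc j < length S"
    with chain have "S ! j \<subset> S ! Suc j"
      by blast
    then show "relabel n ` (S ! j) \<subset> relabel n ` (S ! Suc j)"
      by (rule image_strict_mono[OF inj_on_relabel])
  qed
  moreover have "\<forall>j < length S. \<exists>I \<subseteq> {1..n}. \<exists>P.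
      is_linking (translation_edges n E) I (relabel n ` (S ! j)) P"
    using linkable is_linking_translation by metis
  moreover have "\<forall>j < length mus. \<forall>I. I \<subseteq> {1..n} \<and> card I = card (relabel n ` (S ! j)) \<longrightarrow>
      translate_val x (mus ! j) I
      = min_link_weight (translation_edges n E) (translation_weight n x w) I (relabel n ` (S ! j))"
    using valuation by (simp add: card_relabel_image translate_val_def min_link_weight_translation)
  ultimately show ?thesis
    using V length no_neg_cycle_translation[OF w]
    unfolding gammoid_presentation_def by auto
qed

theorem proposition7p3:
  fixes n :: nat and mus :: "(nat set \<Rightarrow> ereal) list" and x :: "nat \<Rightarrow> real"
  assumes "valuated_flag_gammoid n mus"
  shows "valuated_flag_gammoid n (map (translate_val x) mus)"
proof -
  obtain V E w S where "gammoid_presentation n V E w S mus"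
    using assms valuated_flag_gammoid_iff_presentation by blast
  then show ?thesis
    using gammoid_presentation_translation valuated_flag_gammoid_iff_presentation by blast
qed

end
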